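(* Let $\mathcal{L}$, $\mathcal{C}$, $\mathcal{M}$, the types $\sigma_C,\rho_C,\sigma_M,\rho^1_M,\rho^2_M$, the label sets $L_M$ and the repository $\Delta^{\mathcal{C},\mathcal{M}}_{\mathcal{L}}$ be as in the context. Let $\Gamma$ be a finite basis with $\Gamma\subseteq\{x_C:\sigma_C\to\rho_C\mid C\in\mathcal{C}\}\cup\{x^{\rho}_M:(\sigma_M\to\rho\cap\rho^1_M)\to(\sigma_M\to\rho+\rho^2_M)\mid M\in\mathcal{M},\ \rho\in\mathbb{T}_R,\ [\![\rho]\!]\text{ defined}\}$ (where $x_C$, $x^\rho_M$ are distinct term variables), and let $\sigma\in\mathbb{T}$, $\rho\in\mathbb{T}_R$ be such that $[\![\sigma\to\rho]\!]$ is defined. Let $k=\max(\{\mathrm{level}([\![\rho_C]\!])\mid C\in\mathcal{C}\}\cup\{\mathrm{level}([\![\rho^2_M]\!])\mid M\in\mathcal{M}\}\cup\{\mathrm{level}([\![\rho]\!])\})$. Let $M_1,\ldots,M_n\in\mathcal{M}$ and $C\in\mathcal{C}$. If $\Gamma\vdash x_C\triangleright x^{\rho_1}_{M_1}\triangleright\cdots\triangleright x^{\rho_n}_{M_n}:\sigma\to\rho$ in the type assignment system for $\Lambda_R$, then $\Delta^{\mathcal{C},\mathcal{M}}_{\mathcal{L}}\vdash_k C\triangleright M_1\triangleright\cdots\triangleright M_n:[\![\sigma\to\rho]\!]$ in $\mathsf{BCL}_k(\mathbb{T}_C)$.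
   Context: \textbf{The calculus $\Lambda_R$.} Terms: $M,N ::= x \mid \lambda x.M \mid MN \mid M.l \mid R \mid M\oplus R$, records $R ::= \langle l_i = M_i \mid i\in I\rangle$ ($I$ finite, labels pairwise distinct), $\mathit{lbl}(\langle l_i=M_i\mid i\in I\rangle)=\{l_i\mid i\in I\}$. $\mathbf{Y}=\lambda f.(\lambda x.f(xx))(\lambda x.f(xx))$. A class is a closed term $\mathbf{Y}(\lambda\,\mathit{myClass}\,\lambda\,\mathit{state}.\,R)$; a mixin is a closed term $\lambda\,\mathit{argClass}.\,\mathbf{Y}(\lambda\,\mathit{myClass}\,\lambda\,\mathit{state}.\,(\mathit{argClass}\;\mathit{state})\oplus R_M)$ with $R_M$ a record. \textbf{Types for $\Lambda_R$.} $\mathbb{T}\ni\sigma ::= a\mid\omega\mid\sigma_1\to\sigma_2\mid\sigma_1\cap\sigma_2\mid\rho$, $\mathbb{T}_R\ni\rho ::= \langle\rangle\mid\langle l:\sigma\rangle\mid\rho_1+\rho_2\mid\rho_1\cap\rho_2$. Subtyping $\le$ is the least preorder with: $\sigma\le\omega$; $\omega\le\omega\to\omega$; $\sigma\cap\tau\le\sigma$; $\sigma\cap\tau\le\tau$; $\sigma\le\tau_1,\sigma\le\tau_2\Rightarrow\sigma\le\tau_1\cap\tau_2$; $(\sigma\to\tau_1)\cap(\sigma\to\tau_2)\le\sigma\to\tau_1\cap\tau_2$; $\sigma_2\le\sigma_1,\tau_1\le\tau_2\Rightarrow\sigma_1\to\tau_1\le\sigma_2\to\tau_2$; $\langle l:\sigma\rangle\le\langle\rangle$;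 $\langle l:\sigma\rangle\cap\langle l:\tau\rangle\le\langle l:\sigma\cap\tau\rangle$; $\sigma\le\tau\Rightarrow\langle l:\sigma\rangle\le\langle l:\tau\rangle$; $\rho+\langle\rangle=\langle\rangle+\rho=\rho$; $(\rho_1+\rho_2)+\rho_3=\rho_1+(\rho_2+\rho_3)$; $(\rho_1\cap\rho_2)+\rho_3=(\rho_1+\rho_3)\cap(\rho_2+\rho_3)$; $\langle l:\sigma\rangle+(\langle l:\tau\rangle\cap\rho)=\langle l:\tau\rangle\cap\rho$; $\langle l:\sigma\rangle+(\langle l':\tau\rangle\cap\rho)=\langle l':\tau\rangle\cap(\langle l:\sigma\rangle+\rho)$ if $l\neq l'$; $\rho_1\le\rho_2\Rightarrow\rho_1+\rho\le\rho_2+\rho$; $\rho_1=\rho_2\Rightarrow\rho+\rho_1=\rho+\rho_2$ ($=$ meaning $\le$ both ways). $\mathit{lbl}(\langle\rangle)=\emptyset$, $\mathit{lbl}(\langle l:\sigma\rangle)=\{l\}$, $\mathit{lbl}(\rho_1\cap\rho_2)=\mathit{lbl}(\rho_1+\rho_2)=\mathit{lbl}(\rho_1)\cup\mathit{lbl}(\rho_2)$. \textbf{Type assignment for $\Lambda_R$}: variable axiom from the basis; $\to$-introduction/elimination; $\cap$-introduction; $\Gamma\vdash M:\omega$; subsumption along $\le$; $\Gamma\vdash\langle l_i=M_i\mid i\in I\rangle:\langle\rangle$; from $\Gamma\vdash M_k:\sigma$, $k\in I$ infer $\Gamma\vdash\langle l_i=M_i\mid i\in I\rangle:\langle l_k:\sigma\rangle$;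 from $\Gamma\vdash M:\langle l:\sigma\rangle$ infer $\Gamma\vdash M.l:\sigma$; from $\Gamma\vdash M:\rho_1$, $\Gamma\vdash R:\rho_2$, $\mathit{lbl}(R)=\mathit{lbl}(\rho_2)$ infer $\Gamma\vdash M\oplus R:\rho_1+\rho_2$. \textbf{$\mathsf{BCL}_k(\mathbb{T}_C)$.} Types $\mathbb{T}_C\ni\tau ::= a\mid\alpha\mid\omega\mid\tau_1\to\tau_2\mid\tau_1\cap\tau_2\mid c(\tau)$; subtyping: the arrow/intersection axioms above plus $\tau_1\le\tau_2\Rightarrow c(\tau_1)\le c(\tau_2)$ and $c(\tau_1)\cap c(\tau_2)\le c(\tau_1\cap\tau_2)$. Level: $0$ for $\omega,a,\alpha$; $\mathrm{level}(c(\tau))=1+\mathrm{level}(\tau)$; $\mathrm{level}(\sigma\to\tau)=1+\max(\mathrm{level}(\sigma),\mathrm{level}(\tau))$; $\mathrm{level}(\sigma\cap\tau)=\max(\mathrm{level}(\sigma),\mathrm{level}(\tau))$; $\mathrm{level}(S)=\max_{\alpha\in\mathrm{dom}(S)}\mathrm{level}(S(\alpha))$ for substitutions $S$. A repository $\Delta$ is a finite set of $C:\tau$; combinatory terms $E::=C\mid(E\,E')$. Rules: from $C:\tau\in\Delta$, $\mathrm{level}(S)\le k$ infer $\Delta\vdash_k C:S(\tau)$; $\to$-elimination; $\cap$-introduction; subsumption. \textbf{Translation.} Fixed finite label set $\mathcal{L}$, unary constructors $\langle\!\langle\cdot\rangle\!\rangle$ and $l(\cdot)$ for $l\in\mathcal{L}$;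 partial map $[\![\omega]\!]=\omega$, $[\![a]\!]=a$, $[\![\sigma\to\tau]\!]=[\![\sigma]\!]\to[\![\tau]\!]$, $[\![\sigma\cap\tau]\!]=[\![\sigma]\!]\cap[\![\tau]\!]$, $[\![\langle l:\tau\rangle]\!]=\langle\!\langle l([\![\tau]\!])\rangle\!\rangle$, $[\![\langle\rangle]\!]=\langle\!\langle\omega\rangle\!\rangle$; undefined on types containing $+$. \textbf{Setting.} $\mathcal{C}$ finite set of classes with $\sigma_C,\rho_C$, $[\![\sigma_C\to\rho_C]\!]$ defined, $\vdash C:\sigma_C\to\rho_C$. $\mathcal{M}$ finite set of mixins with $\sigma_M,\rho^1_M,\rho^2_M$ whose translations are defined and such that for all $\rho\in\mathbb{T}_R$, $\vdash M:(\sigma_M\to\rho\cap\rho^1_M)\to(\sigma_M\to\rho+\rho^2_M)$; $L_M=\mathit{lbl}(\rho^2_M)\subseteq\mathcal{L}$ non-empty, the labels defined by $M$. Repository $\Delta^{\mathcal{C},\mathcal{M}}_{\mathcal{L}}=\{C:[\![\sigma_C\to\rho_C]\!]\}\cup\{M:(([\![\sigma_M]\!]\to[\![\rho^1_M]\!])\to([\![\sigma_M]\!]\to[\![\rho^2_M]\!]))\cap\bigcap_{l\in\mathcal{L}\setminus L_M}(([\![\sigma_M]\!]\to\langle\!\langle l(\alpha_l)\rangle\!\rangle)\to([\![\sigma_M]\!]\to\langle\!\langle l(\alpha_l)\rangle\!\rangle))\}$. $x\triangleright f$ means $f\,x$, left associative. *)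

theory Defs
  imports Main
begin

section \<open>The calculus Lambda_R\<close>

text \<open>Term variables are natural numbers, labels range over a linearly ordered type 'l
 (the order is only used to form the finite intersection in the mixin types).\<close>

type_synonym var = nat

datatype 'l trm =
    Var var
  | Lam var "'l trm"
  | App "'l trm" "'l trm"
  | Sel "'l trm" 'l
  | Rec "('l \<times> 'l trm) list"
  | Ext "'l trm" "('l \<times> 'l trm) list"

fun fv :: "'l trm \<Rightarrow> var set" where
  "fv (Var x) = {x}"
| "fv (Lam x M) = fv M - {x}"
| "fv (App M N) = fv M \<union> fv N"
| "fv (Sel M l) = fv M"
| "fv (Rec fs) = (\<Union>p\<in>set fs. fv (snd p))"
| "fv (Ext M fs) = fv M \<union> (\<Union>p\<in>set fs. fv (snd p))"

definition closed :: "'l trm \<Rightarrow> bool" where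
  "closed M \<longleftrightarrow> fv M = {}"

definition is_record :: "('l \<times> 'l trm) list \<Rightarrow> bool" where
  "is_record fs \<longleftrightarrow> distinct (map fst fs)"

definition lbl_rec :: "('l \<times> 'l trm) list \<Rightarrow> 'l set" where
  "lbl_rec fs = fst ` set fs"

definition Ycomb :: "var \<Rightarrow> var \<Rightarrow> 'l trm" where
  "Ycomb f x = Lam f (App (Lam x (App (Var f) (App (Var x) (Var x))))
                          (Lam x (App (Var f) (App (Var x) (Var x)))))"

definition is_class :: "'l trm \<Rightarrow> bool" where
  "is_class C \<longleftrightarrow> closed C \<and>
     (\<exists>f x myClass state fs. f \<noteq> x \<and> is_record fs \<and>
        C = App (Ycomb f x) (Lam myClass (Lam state (Rec fs))))"

definition is_mixin :: "'l trm \<Rightarrow> bool" where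
  "is_mixin M \<longleftrightarrow> closed M \<and>
     (\<exists>f x argClass myClass state fs. f \<noteq> x \<and> is_record fs \<and>
        M = Lam argClass (App (Ycomb f x)
              (Lam myClass (Lam state (Ext (App (Var argClass) (Var state)) fs)))))"

section \<open>Types for Lambda_R\<close>

datatype ('a, 'l) ty =
    TAtom 'a
  | TOmega
  | TArr "('a, 'l) ty" "('a, 'l) ty"
  | TInter "('a, 'l) ty" "('a, 'l) ty"
  | REmpty
  | RField 'l "('a, 'l) ty"
  | RPlus "('a, 'l) ty" "('a, 'l) ty"

text \<open>Well-formed types: is_ty = membership in T, is_rty = membership in T_R.\<close>
fun is_ty :: "('a, 'l) ty \<Rightarrow> bool" and is_rty :: "('a, 'l) ty \<Rightarrow> bool" where
  "is_ty (TAtom a) = True"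
| "is_ty TOmega = True"
| "is_ty (TArr s t) = (is_ty s \<and> is_ty t)"
| "is_ty (TInter s t) = (is_ty s \<and> is_ty t)"
| "is_ty REmpty = True"
| "is_ty (RField l s) = is_ty s"
| "is_ty (RPlus r1 r2) = (is_rty r1 \<and> is_rty r2)"
| "is_rty (TAtom a) = False"
| "is_rty TOmega = False"
| "is_rty (TArr s t) = False"
| "is_rty (TInter r1 r2) = (is_rty r1 \<and> is_rty r2)"
| "is_rty REmpty = True"
| "is_rty (RField l s) = is_ty s"
| "is_rty (RPlus r1 r2) = (is_rty r1 \<and> is_rty r2)"

fun lbl :: "('a, 'l) ty \<Rightarrow> 'l set" where
  "lbl REmpty = {}"
| "lbl (RField l s) = {l}"
| "lbl (TInter r1 r2) = lbl r1 \<union> lbl r2"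
| "lbl (RPlus r1 r2) = lbl r1 \<union> lbl r2"
| "lbl _ = {}"

text \<open>Subtyping on T: the least preorder closed under the listed rules; equations
  rho = rho' are read as the two inequalities.\<close>
inductive sub :: "('a, 'l) ty \<Rightarrow> ('a, 'l) ty \<Rightarrow> bool" where
  refl: "is_ty s \<Longrightarrow> sub s s"
| trans: "sub s t \<Longrightarrow> sub t u \<Longrightarrow> sub s u"
| omega_top: "is_ty s \<Longrightarrow> sub s TOmega"
| omega_arr: "sub TOmega (TArr TOmega TOmega)"
| inter_l: "is_ty s \<Longrightarrow> is_ty t \<Longrightarrow> sub (TInter s t) s"
| inter_r: "is_ty s \<Longrightarrow> is_ty t \<Longrightarrow> sub (TInter s t) t"
| inter_glb: "sub s t1 \<Longrightarrow> sub s t2 \<Longrightarrow> sub s (TInter t1 t2)"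
| arr_dist: "is_ty s \<Longrightarrow> is_ty t1 \<Longrightarrow> is_ty t2 \<Longrightarrow>
     sub (TInter (TArr s t1) (TArr s t2)) (TArr s (TInter t1 t2))"
| arr_mono: "sub s2 s1 \<Longrightarrow> sub t1 t2 \<Longrightarrow> sub (TArr s1 t1) (TArr s2 t2)"
| field_empty: "is_ty s \<Longrightarrow> sub (RField l s) REmpty"
| field_dist: "is_ty s \<Longrightarrow> is_ty t \<Longrightarrow>
     sub (TInter (RField l s) (RField l t)) (RField l (TInter s t))"
| field_mono: "sub s t \<Longrightarrow> sub (RField l s) (RField l t)"
| plus_empty_r1: "is_rty r \<Longrightarrow> sub (RPlus r REmpty) r"
| plus_empty_r2: "is_rty r \<Longrightarrow> sub r (RPlus r REmpty)"
| plus_empty_l1: "is_rty r \<Longrightarrow> sub (RPlus REmpty r) r"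
| plus_empty_l2: "is_rty r \<Longrightarrow> sub r (RPlus REmpty r)"
| plus_assoc1: "is_rty r1 \<Longrightarrow> is_rty r2 \<Longrightarrow> is_rty r3 \<Longrightarrow>
     sub (RPlus (RPlus r1 r2) r3) (RPlus r1 (RPlus r2 r3))"
| plus_assoc2: "is_rty r1 \<Longrightarrow> is_rty r2 \<Longrightarrow> is_rty r3 \<Longrightarrow>
     sub (RPlus r1 (RPlus r2 r3)) (RPlus (RPlus r1 r2) r3)"
| plus_inter1: "is_rty r1 \<Longrightarrow> is_rty r2 \<Longrightarrow> is_rty r3 \<Longrightarrow>
     sub (RPlus (TInter r1 r2) r3) (TInter (RPlus r1 r3) (RPlus r2 r3))"
| plus_inter2: "is_rty r1 \<Longrightarrow> is_rty r2 \<Longrightarrow> is_rty r3 \<Longrightarrow>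
     sub (TInter (RPlus r1 r3) (RPlus r2 r3)) (RPlus (TInter r1 r2) r3)"
| plus_same1: "is_ty s \<Longrightarrow> is_ty t \<Longrightarrow> is_rty r \<Longrightarrow>
     sub (RPlus (RField l s) (TInter (RField l t) r)) (TInter (RField l t) r)"
| plus_same2: "is_ty s \<Longrightarrow> is_ty t \<Longrightarrow> is_rty r \<Longrightarrow>
     sub (TInter (RField l t) r) (RPlus (RField l s) (TInter (RField l t) r))"
| plus_diff1: "l \<noteq> l' \<Longrightarrow> is_ty s \<Longrightarrow> is_ty t \<Longrightarrow> is_rty r \<Longrightarrow>
     sub (RPlus (RField l s) (TInter (RField l' t) r)) (TInter (RField l' t) (RPlus (RField l s) r))"
| plus_diff2: "l \<noteq> l' \<Longrightarrow> is_ty s \<Longrightarrow> is_ty t \<Longrightarrow> is_rty r \<Longrightarrow>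
     sub (TInter (RField l' t) (RPlus (RField l s) r)) (RPlus (RField l s) (TInter (RField l' t) r))"
| plus_mono_l: "is_rty r1 \<Longrightarrow> is_rty r2 \<Longrightarrow> is_rty r \<Longrightarrow> sub r1 r2 \<Longrightarrow>
     sub (RPlus r1 r) (RPlus r2 r)"
| plus_cong_r: "is_rty r1 \<Longrightarrow> is_rty r2 \<Longrightarrow> is_rty r \<Longrightarrow> sub r1 r2 \<Longrightarrow> sub r2 r1 \<Longrightarrow>
     sub (RPlus r r1) (RPlus r r2)"

type_synonym ('a, 'l) basis = "(var \<times> ('a, 'l) ty) set"

definition extend :: "('a, 'l) basis \<Rightarrow> var \<Rightarrow> ('a, 'l) ty \<Rightarrow> ('a, 'l) basis" where
  "extend \<Gamma> x s = insert (x, s) {p \<in> \<Gamma>. fst p \<noteq> x}"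

inductive tyass :: "('a, 'l) basis \<Rightarrow> 'l trm \<Rightarrow> ('a, 'l) ty \<Rightarrow> bool" where
  var: "(x, s) \<in> \<Gamma> \<Longrightarrow> tyass \<Gamma> (Var x) s"
| abs: "is_ty s \<Longrightarrow> tyass (extend \<Gamma> x s) M t \<Longrightarrow> tyass \<Gamma> (Lam x M) (TArr s t)"
| app: "tyass \<Gamma> M (TArr s t) \<Longrightarrow> tyass \<Gamma> N s \<Longrightarrow> tyass \<Gamma> (App M N) t"
| inter: "tyass \<Gamma> M s \<Longrightarrow> tyass \<Gamma> M t \<Longrightarrow> tyass \<Gamma> M (TInter s t)"
| omega: "tyass \<Gamma> M TOmega"
| subsum: "tyass \<Gamma> M s \<Longrightarrow> sub s t \<Longrightarrow> tyass \<Gamma> M t"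
| rec_empty: "is_record fs \<Longrightarrow> tyass \<Gamma> (Rec fs) REmpty"
| rec_field: "is_record fs \<Longrightarrow> (l, M) \<in> set fs \<Longrightarrow> tyass \<Gamma> M s \<Longrightarrow> tyass \<Gamma> (Rec fs) (RField l s)"
| sel: "tyass \<Gamma> M (RField l s) \<Longrightarrow> tyass \<Gamma> (Sel M l) s"
| ext: "is_rty r1 \<Longrightarrow> is_rty r2 \<Longrightarrow> tyass \<Gamma> M r1 \<Longrightarrow> tyass \<Gamma> (Rec fs) r2 \<Longrightarrow>
        lbl_rec fs = lbl r2 \<Longrightarrow> tyass \<Gamma> (Ext M fs) (RPlus r1 r2)"

section \<open>BCL_k(T_C)\<close>

text \<open>Type constructors: BCon None is the record constructor <<.>>, BCon (Some l) is l(.).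
  Type variables are indexed by labels (only the variables alpha_l are needed).\<close>
datatype ('a, 'l) bty =
    BAtom 'a
  | BVar 'l
  | BOmega
  | BArr "('a, 'l) bty" "('a, 'l) bty"
  | BInter "('a, 'l) bty" "('a, 'l) bty"
  | BCon "'l option" "('a, 'l) bty"

inductive bsub :: "('a, 'l) bty \<Rightarrow> ('a, 'l) bty \<Rightarrow> bool" where
  refl: "bsub s s"
| trans: "bsub s t \<Longrightarrow> bsub t u \<Longrightarrow> bsub s u"
| omega_top: "bsub s BOmega"
| omega_arr: "bsub BOmega (BArr BOmega BOmega)"
| inter_l: "bsub (BInter s t) s"
| inter_r: "bsub (BInter s t) t"
| inter_glb: "bsub s t1 \<Longrightarrow> bsub s t2 \<Longrightarrow> bsub s (BInter t1 t2)"
| arr_dist: "bsub (BInter (BArr s t1) (BArr s t2)) (BArr s (BInter t1 t2))"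
| arr_mono: "bsub s2 s1 \<Longrightarrow> bsub t1 t2 \<Longrightarrow> bsub (BArr s1 t1) (BArr s2 t2)"
| con_mono: "bsub t1 t2 \<Longrightarrow> bsub (BCon c t1) (BCon c t2)"
| con_dist: "bsub (BInter (BCon c t1) (BCon c t2)) (BCon c (BInter t1 t2))"

fun level :: "('a, 'l) bty \<Rightarrow> nat" where
  "level (BAtom a) = 0"
| "level (BVar v) = 0"
| "level BOmega = 0"
| "level (BCon c t) = Suc (level t)"
| "level (BArr s t) = Suc (max (level s) (level t))"
| "level (BInter s t) = max (level s) (level t)"

fun bsubst :: "('l \<Rightarrow> ('a, 'l) bty) \<Rightarrow> ('a, 'l) bty \<Rightarrow> ('a, 'l) bty" where
  "bsubst S (BAtom a) = BAtom a"
| "bsubst S (BVar v) = S v"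
| "bsubst S BOmega = BOmega"
| "bsubst S (BArr s t) = BArr (bsubst S s) (bsubst S t)"
| "bsubst S (BInter s t) = BInter (bsubst S s) (bsubst S t)"
| "bsubst S (BCon c t) = BCon c (bsubst S t)"

definition subst_level_le :: "('l \<Rightarrow> ('a, 'l) bty) \<Rightarrow> nat \<Rightarrow> bool" where
  "subst_level_le S k \<longleftrightarrow> (\<forall>v. S v \<noteq> BVar v \<longrightarrow> level (S v) \<le> k)"

datatype 'c comb = Cst 'c | CApp "'c comb" "'c comb"

inductive bcl :: "nat \<Rightarrow> ('c \<times> ('a, 'l) bty) set \<Rightarrow> 'c comb \<Rightarrow> ('a, 'l) bty \<Rightarrow> bool" where
  var: "(C, t) \<in> \<Delta> \<Longrightarrow> subst_level_le S k \<Longrightarrow> bcl k \<Delta> (Cst C) (bsubst S t)"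
| app: "bcl k \<Delta> E (BArr s t) \<Longrightarrow> bcl k \<Delta> E' s \<Longrightarrow> bcl k \<Delta> (CApp E E') t"
| inter: "bcl k \<Delta> E s \<Longrightarrow> bcl k \<Delta> E t \<Longrightarrow> bcl k \<Delta> E (BInter s t)"
| subsum: "bcl k \<Delta> E s \<Longrightarrow> bsub s t \<Longrightarrow> bcl k \<Delta> E t"

section \<open>Translation\<close>

text \<open>Partial translation w.r.t. the fixed finite label set L: undefined (None) on types
  containing +, and on record types mentioning a label outside L (there is no
  constructor l(.) for such labels).\<close>
fun tr :: "'l set \<Rightarrow> ('a, 'l) ty \<Rightarrow> ('a, 'l) bty option" where
  "tr L TOmega = Some BOmega"
| "tr L (TAtom a) = Some (BAtom a)"
| "tr L (TArr s t) = (case (tr L s, tr L t) of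
      (Some s', Some t') \<Rightarrow> Some (BArr s' t') | _ \<Rightarrow> None)"
| "tr L (TInter s t) = (case (tr L s, tr L t) of
      (Some s', Some t') \<Rightarrow> Some (BInter s' t') | _ \<Rightarrow> None)"
| "tr L (RField l t) = (if l \<in> L then
      (case tr L t of Some t' \<Rightarrow> Some (BCon None (BCon (Some l) t')) | None \<Rightarrow> None)
     else None)"
| "tr L REmpty = Some (BCon None BOmega)"
| "tr L (RPlus r1 r2) = None"

abbreviation trd :: "'l set \<Rightarrow> ('a, 'l) ty \<Rightarrow> bool" where
  "trd L t \<equiv> tr L t \<noteq> None"

abbreviation trt :: "'l set \<Rightarrow> ('a, 'l) ty \<Rightarrow> ('a, 'l) bty" where
  "trt L t \<equiv> the (tr L t)"

fun binters :: "('a, 'l) bty list \<Rightarrow> ('a, 'l) bty" where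
  "binters [] = BOmega"
| "binters [t] = t"
| "binters (t # ts) = BInter t (binters ts)"

definition mixin_bty ::
  "'l::linorder set \<Rightarrow> ('a, 'l) bty \<Rightarrow> ('a, 'l) bty \<Rightarrow> ('a, 'l) bty \<Rightarrow> 'l set \<Rightarrow> ('a, 'l) bty" where
  "mixin_bty L s r1 r2 LM =
     BInter (BArr (BArr s r1) (BArr s r2))
       (binters (map (\<lambda>l. BArr (BArr s (BCon None (BCon (Some l) (BVar l))))
                                (BArr s (BCon None (BCon (Some l) (BVar l)))))
                     (sorted_list_of_set (L - LM))))"

definition repo ::
  "'l::linorder set \<Rightarrow> 'l trm set \<Rightarrow> 'l trm set \<Rightarrow>
   ('l trm \<Rightarrow> ('a, 'l) ty) \<Rightarrow> ('l trm \<Rightarrow> ('a, 'l) ty) \<Rightarrow>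
   ('l trm \<Rightarrow> ('a, 'l) ty) \<Rightarrow> ('l trm \<Rightarrow> ('a, 'l) ty) \<Rightarrow> ('l trm \<Rightarrow> ('a, 'l) ty) \<Rightarrow>
   ('l trm \<times> ('a, 'l) bty) set" where
  "repo L Cs Ms sigC rhoC sigM rho1M rho2M =
     {(C, trt L (TArr (sigC C) (rhoC C))) | C. C \<in> Cs} \<union>
     {(M, mixin_bty L (trt L (sigM M)) (trt L (rho1M M)) (trt L (rho2M M)) (lbl (rho2M M))) | M. M \<in> Ms}"

definition pipe_trm :: "'l trm \<Rightarrow> 'l trm list \<Rightarrow> 'l trm" where
  "pipe_trm x fs = foldl (\<lambda>acc f. App f acc) x fs"

definition pipe_comb :: "'c comb \<Rightarrow> 'c comb list \<Rightarrow> 'c comb" where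
  "pipe_comb x fs = foldl (\<lambda>acc f. CApp f acc) x fs"

end

theory Submission
  imports Defs
begin

text \<open>Types of \<open>\<Lambda>\<^sub>R\<close>, including those built with +, are translated into BCL types by
  normalizing a record type to the finite map of its fields (the right operand of + overriding the
  left one), read back as an intersection of field types \<open>\<langle>\<langle>l(\<tau>)\<rangle>\<rangle>\<close>. On +-free types this is the
  given translation, and it maps subtyping of \<open>\<Lambda>\<^sub>R\<close> into subtyping of BCL, where subtyping into
  arrow and record types can be inverted.

  The theorem follows by induction along the pipeline: every informative type of
  \<open>x\<^sub>C \<triangleright> x\<^sub>M\<^sub>1 \<triangleright> \<dots> \<triangleright> x\<^sub>M\<^sub>i\<close> lies above a BCL type \<open>\<sigma>' \<rightarrow> \<langle>\<langle>F\<rangle>\<rangle>\<close> of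
  \<open>C \<triangleright> M\<^sub>1 \<triangleright> \<dots> \<triangleright> M\<^sub>i\<close>, where F is a finite field map of level at most k. For the next
  mixin M, inverting the typing of the application of \<open>x\<^sup>\<rho>\<^sub>M\<close> gives \<open>\<sigma>\<^sub>M \<le> \<sigma>'\<close> and
  \<open>\<langle>\<langle>F\<rangle>\<rangle> \<le> \<rho> \<inter> \<rho>\<^sup>1\<^sub>M\<close>; instantiating the variable \<open>\<alpha>\<^sub>l\<close> of the type of M with F(l) for
  every \<open>l \<in> L - L\<^sub>M\<close> lets M carry over the fields it does not define, and the resulting record
  type lies below the translation of \<open>\<rho> + \<rho>\<^sup>2\<^sub>M\<close>.\<close>

section \<open>Intersections and inversion of BCL subtyping\<close>

lemma binters_lower: "x \<in> set xs \<Longrightarrow> bsub (binters xs) x"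
proof (induction xs rule: binters.induct)
  case (3 t t' ts)
  then show ?case by (auto intro: bsub.inter_l bsub.trans[OF bsub.inter_r])
qed (auto intro: bsub.refl)

lemma binters_greatest: "(\<And>x. x \<in> set xs \<Longrightarrow> bsub s x) \<Longrightarrow> bsub s (binters xs)"
  by (induction xs rule: binters.induct) (auto intro: bsub.omega_top bsub.inter_glb)

lemma binters_mono: "set xs \<subseteq> set ys \<Longrightarrow> bsub (binters ys) (binters xs)"
  by (rule binters_greatest) (auto intro: binters_lower)

lemma bsub_BArr_binters:
  "(\<And>t. t \<in> set ts \<Longrightarrow> bsub u (BArr s t)) \<Longrightarrow> bsub u (BArr s (binters ts))"
proof (induction ts rule: binters.induct)
  case 1
  have "bsub BOmega (BArr s BOmega)"
    using bsub.omega_arr bsub.arr_mono[OF bsub.omega_top bsub.refl] by (rule bsub.trans)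
  then show ?case by (simp add: bsub.trans[OF bsub.omega_top])
next
  case (3 t t' ts)
  then have "bsub u (BInter (BArr s t) (BArr s (binters (t' # ts))))"
    by (simp add: bsub.inter_glb)
  then show ?case using bsub.arr_dist bsub.trans by fastforce
qed simp

lemma bsub_BArr_BArr_binters:
  assumes "\<And>t. t \<in> set ts \<Longrightarrow> bsub u (BArr p (BArr s t))"
  shows "bsub u (BArr p (BArr s (binters ts)))"
proof -
  have "bsub u (BArr p (binters (map (BArr s) ts)))"
    by (rule bsub_BArr_binters) (use assms in auto)
  moreover have "bsub (binters (map (BArr s) ts)) (BArr s (binters ts))"
    by (rule bsub_BArr_binters) (auto intro: binters_lower)
  ultimately show ?thesis
    using bsub.arr_mono[OF bsub.refl] bsub.trans by blast
qed

lemma bsubst_binters: "bsubst S (binters ts) = binters (map (bsubst S) ts)"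
  by (induction ts rule: binters.induct) auto

lemma omega_or_bsub_BInter:
  assumes "bsub BOmega s \<or> Q \<and> bsub P s" and "bsub BOmega t \<or> Q \<and> bsub P t"
  shows "bsub BOmega (BInter s t) \<or> Q \<and> bsub P (BInter s t)"
proof -
  have lift: "bsub P u" if "bsub BOmega u" for u
    using bsub.trans[OF bsub.omega_top that] .
  from assms show ?thesis
    by (elim disjE conjE) (simp_all add: bsub.inter_glb lift)
qed

lemma omega_or_bsub_mono:
  assumes "bsub BOmega s \<or> Q \<and> bsub P s" and "bsub s t"
  shows "bsub BOmega t \<or> Q \<and> bsub P t"
  using assms(1) bsub.trans[OF _ assms(2)] by blast

text \<open>The residual \<open>arr_residual u s\<close> is the type of an application of a term of type u to
  an argument of type s; its monotonicity in u inverts subtyping between arrows. The arguments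
  \<open>con_args c u\<close> of the constructor c play the same role for constructor types.\<close>

fun arrows :: "('a, 'l) bty \<Rightarrow> (('a, 'l) bty \<times> ('a, 'l) bty) list" where
  "arrows (BArr s t) = [(s, t)]"
| "arrows (BInter u v) = arrows u @ arrows v"
| "arrows _ = []"

definition arr_residual :: "('a, 'l) bty \<Rightarrow> ('a, 'l) bty \<Rightarrow> ('a, 'l) bty" where
  "arr_residual u s = binters (map snd (filter (\<lambda>p. bsub s (fst p)) (arrows u)))"

lemma arr_residual_BArr:
  "arr_residual (BArr s t) s' = (if bsub s' s then t else BOmega)"
  by (simp add: arr_residual_def)

lemma arr_residual_mono: "bsub u v \<Longrightarrow> bsub (arr_residual u s) (arr_residual v s)"
proof (induction rule: bsub.induct)
  case (trans u v w)
  then show ?case by (meson bsub.trans)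
next
  case (inter_glb u v w)
  have "bsub (arr_residual u s) t"
    if "t \<in> set (map snd (filter (\<lambda>p. bsub s (fst p)) (arrows (BInter v w))))" for t
  proof -
    from that have "t \<in> set (map snd (filter (\<lambda>p. bsub s (fst p)) (arrows v)))
        \<or> t \<in> set (map snd (filter (\<lambda>p. bsub s (fst p)) (arrows w)))"
      by auto
    then show ?thesis
      using inter_glb.IH unfolding arr_residual_def by (meson binters_lower bsub.trans)
  qed
  then show ?case
    unfolding arr_residual_def[of "BInter v w"] by (rule binters_greatest)
next
  case (arr_mono s2 s1 t1 t2)
  then show ?case by (auto simp: arr_residual_BArr intro: bsub.omega_top bsub.trans)
qed (auto simp: arr_residual_def bsub.refl bsub.omega_top intro: binters_mono)

lemma bsub_BArr_inv:
  assumes "bsub (BArr s t) (BArr s' t')"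
  shows "bsub BOmega t' \<or> (bsub s' s \<and> bsub t t')"
  using arr_residual_mono[OF assms, of s']
  by (simp add: arr_residual_BArr bsub.refl split: if_splits)

lemma omega_bsub_BArr_inv: "bsub BOmega (BArr s t) \<Longrightarrow> bsub BOmega t"
  using arr_residual_mono[of BOmega "BArr s t" s]
  by (simp add: arr_residual_def bsub.refl)

fun con_args :: "'l option \<Rightarrow> ('a, 'l) bty \<Rightarrow> ('a, 'l) bty list" where
  "con_args c (BCon c' t) = (if c = c' then [t] else [])"
| "con_args c (BInter u v) = con_args c u @ con_args c v"
| "con_args c _ = []"

lemma con_args_binters: "con_args c (binters ts) = concat (map (con_args c) ts)"
  by (induction ts rule: binters.induct) auto

lemma con_args_mono:
  "bsub u v \<Longrightarrow> (con_args c v \<noteq> [] \<longrightarrow> con_args c u \<noteq> [])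
     \<and> bsub (binters (con_args c u)) (binters (con_args c v))"
proof (induction rule: bsub.induct)
  case (trans u v w)
  then show ?case by (meson bsub.trans)
next
  case (inter_glb u v w)
  have "bsub (binters (con_args c u)) t" if "t \<in> set (con_args c (BInter v w))" for t
  proof -
    from that have "t \<in> set (con_args c v) \<or> t \<in> set (con_args c w)"
      by simp
    then show ?thesis using inter_glb.IH by (meson binters_lower bsub.trans)
  qed
  then show ?case
    using inter_glb.IH by (auto intro: binters_greatest)
qed (auto simp: bsub.refl bsub.omega_top intro: binters_mono bsub.con_mono)

lemma bsub_BCon_inv:
  "bsub u (BCon c t) \<Longrightarrow> con_args c u \<noteq> [] \<and> bsub (binters (con_args c u)) t"
  using con_args_mono[of u "BCon c t" c] by simp

lemma omega_not_bsub_con: "con_args c t \<noteq> [] \<Longrightarrow> \<not> bsub BOmega t"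
  using con_args_mono[of BOmega t c] by auto

section \<open>Field maps and BCL record types\<close>

type_synonym ('a, 'l) fieldmap = "'l \<Rightarrow> ('a, 'l) bty option"

abbreviation bfield :: "'l \<Rightarrow> ('a, 'l) bty \<Rightarrow> ('a, 'l) bty" where
  "bfield l t \<equiv> BCon None (BCon (Some l) t)"

text \<open>The conjunct \<open>\<langle>\<langle>\<omega>\<rangle>\<rangle>\<close> keeps \<open>brec F\<close> a record type when F is empty, as the
  translation of \<open>\<langle>\<rangle>\<close>.\<close>

definition brec :: "('a, 'l::linorder) fieldmap \<Rightarrow> ('a, 'l) bty" where
  "brec F = BInter (BCon None BOmega)
     (binters (map (\<lambda>l. bfield l (the (F l))) (sorted_list_of_set (dom F))))"

definition fieldmap_meet :: "('a, 'l) fieldmap \<Rightarrow> ('a, 'l) fieldmap \<Rightarrow> ('a, 'l) fieldmap" where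
  "fieldmap_meet F G = (\<lambda>l. case F l of
      None \<Rightarrow> G l
    | Some s \<Rightarrow> (case G l of None \<Rightarrow> Some s | Some t \<Rightarrow> Some (BInter s t)))"

definition fieldmap_le :: "('a, 'l) fieldmap \<Rightarrow> ('a, 'l) fieldmap \<Rightarrow> bool" where
  "fieldmap_le F G \<longleftrightarrow> (\<forall>l t. G l = Some t \<longrightarrow> (\<exists>s. F l = Some s \<and> bsub s t))"

lemma dom_fieldmap_meet [simp]: "dom (fieldmap_meet F G) = dom F \<union> dom G"
  by (auto simp: fieldmap_meet_def split: option.splits)

lemma bfield_mono: "bsub s t \<Longrightarrow> bsub (bfield l s) (bfield l t)"
  by (intro bsub.con_mono)

lemma bfield_inter: "bsub (BInter (bfield l s) (bfield l t)) (bfield l (BInter s t))"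
  by (meson bsub.con_dist bsub.con_mono bsub.trans)

lemma bfield_le_empty: "bsub (bfield l t) (BCon None BOmega)"
  by (intro bsub.con_mono bsub.omega_top)

lemma brec_le_empty: "bsub (brec F) (BCon None BOmega)"
  unfolding brec_def by (rule bsub.inter_l)

lemma brec_lower: "finite (dom F) \<Longrightarrow> F l = Some t \<Longrightarrow> bsub (brec F) (bfield l t)"
  unfolding brec_def by (rule bsub.trans[OF bsub.inter_r binters_lower]) auto

lemma brec_greatest:
  assumes "finite (dom F)" and "bsub u (BCon None BOmega)"
    and "\<And>l t. F l = Some t \<Longrightarrow> bsub u (bfield l t)"
  shows "bsub u (brec F)"
  unfolding brec_def
  by (rule bsub.inter_glb[OF assms(2) binters_greatest]) (use assms in auto)

lemma brec_le_bfield_inv: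
  assumes fin: "finite (dom F)" and le: "bsub (brec F) (bfield l t)"
  obtains s where "F l = Some s" and "bsub s t"
proof -
  define ls where "ls = sorted_list_of_set (dom F)"
  define fs where "fs = map (\<lambda>l. BCon (Some l) (the (F l))) ls"
  have "con_args None (brec F) = BOmega # fs"
    by (simp add: brec_def con_args_binters ls_def fs_def comp_def)
  with bsub_BCon_inv[OF le] have "bsub (binters (BOmega # fs)) (BCon (Some l) t)"
    by simp
  from bsub_BCon_inv[OF this]
  have ne: "con_args (Some l) (binters (BOmega # fs)) \<noteq> []"
    and args_le: "bsub (binters (con_args (Some l) (binters (BOmega # fs)))) t"
    by auto
  have args: "con_args (Some l) (binters (BOmega # fs)) = map (\<lambda>l. the (F l)) (filter ((=) l) ls)"
    unfolding fs_def con_args_binters by (induction ls) auto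
  from ne have "l \<in> set ls"
    unfolding args by (auto simp: filter_empty_conv)
  moreover have "distinct ls"
    by (simp add: ls_def)
  ultimately have "filter ((=) l) ls = [l]"
    by (induction ls) (auto simp: filter_empty_conv)
  with args_le args have "bsub (the (F l)) t"
    by simp
  moreover from \<open>l \<in> set ls\<close> fin have "F l = Some (the (F l))"
    by (auto simp: ls_def)
  ultimately show ?thesis
    using that by blast
qed

lemma fieldmap_le_refl: "fieldmap_le F F"
  by (auto simp: fieldmap_le_def intro: bsub.refl)

lemma fieldmap_le_trans: "fieldmap_le F G \<Longrightarrow> fieldmap_le G H \<Longrightarrow> fieldmap_le F H"
  unfolding fieldmap_le_def by (meson bsub.trans)

lemma fieldmap_le_empty: "fieldmap_le F Map.empty"
  by (simp add: fieldmap_le_def)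

lemma finite_dom_fieldmap_le: "finite (dom F) \<Longrightarrow> fieldmap_le F G \<Longrightarrow> finite (dom G)"
  unfolding fieldmap_le_def by (rule finite_subset[rotated]) auto

lemma fieldmap_le_meet1: "fieldmap_le (fieldmap_meet F G) F"
  by (auto simp: fieldmap_le_def fieldmap_meet_def intro: bsub.refl bsub.inter_l
      split: option.splits)

lemma fieldmap_le_meet2: "fieldmap_le (fieldmap_meet F G) G"
  by (auto simp: fieldmap_le_def fieldmap_meet_def intro: bsub.refl bsub.inter_r
      split: option.splits)

lemma fieldmap_le_meet_greatest:
  "fieldmap_le F G1 \<Longrightarrow> fieldmap_le F G2 \<Longrightarrow> fieldmap_le F (fieldmap_meet G1 G2)"
  unfolding fieldmap_le_def fieldmap_meet_def
  by (fastforce intro: bsub.inter_glb split: option.splits)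

lemma fieldmap_le_add_mono: "fieldmap_le F1 F2 \<Longrightarrow> fieldmap_le (F1 ++ F) (F2 ++ F)"
  by (auto simp: fieldmap_le_def map_add_def intro: bsub.refl split: option.splits)

lemma fieldmap_le_add_cong:
  "fieldmap_le G1 G2 \<Longrightarrow> fieldmap_le G2 G1 \<Longrightarrow> fieldmap_le (F ++ G1) (F ++ G2)"
  unfolding fieldmap_le_def map_add_def
  by (fastforce intro: bsub.refl split: option.splits)

lemma fieldmap_le_add_meet:
  "fieldmap_le (fieldmap_meet F1 F2 ++ F) (fieldmap_meet (F1 ++ F) (F2 ++ F))"
  by (auto simp: fieldmap_le_def map_add_def fieldmap_meet_def
      intro: bsub.refl bsub.inter_glb split: option.splits)

lemma fieldmap_le_meet_add:
  "fieldmap_le (fieldmap_meet (F1 ++ F) (F2 ++ F)) (fieldmap_meet F1 F2 ++ F)"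
  by (auto simp: fieldmap_le_def map_add_def fieldmap_meet_def
      intro: bsub.refl bsub.inter_l split: option.splits)

lemma fieldmap_le_restrict_add:
  assumes "fieldmap_le F G" and "dom G \<subseteq> A \<union> dom H"
  shows "fieldmap_le (F |` A ++ H) (G ++ H)"
  unfolding fieldmap_le_def
proof (intro allI impI)
  fix l t assume t: "(G ++ H) l = Some t"
  show "\<exists>s. (F |` A ++ H) l = Some s \<and> bsub s t"
  proof (cases "H l")
    case None
    with t assms(2) have "G l = Some t" and "l \<in> A"
      by (auto simp: map_add_def)
    with assms(1) None show ?thesis
      by (auto simp: fieldmap_le_def map_add_def)
  next
    case (Some s)
    with t show ?thesis
      by (simp add: bsub.refl)
  qed
qed

lemma map_add_singleton_meet_same:
  "[l \<mapsto> s] ++ fieldmap_meet [l \<mapsto> t] F = fieldmap_meet [l \<mapsto> t] F"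
  by (auto simp: fun_eq_iff map_add_def fieldmap_meet_def split: option.splits)

lemma map_add_singleton_meet_other:
  "l \<noteq> l' \<Longrightarrow> [l \<mapsto> s] ++ fieldmap_meet [l' \<mapsto> t] F = fieldmap_meet [l' \<mapsto> t] ([l \<mapsto> s] ++ F)"
  by (auto simp: fun_eq_iff map_add_def fieldmap_meet_def split: option.splits)

lemma fieldmap_meet_singletons: "fieldmap_meet [l \<mapsto> s] [l \<mapsto> t] = [l \<mapsto> BInter s t]"
  by (auto simp: fun_eq_iff fieldmap_meet_def)

lemma brec_mono:
  assumes fin: "finite (dom F)" and le: "fieldmap_le F G"
  shows "bsub (brec F) (brec G)"
proof (rule brec_greatest[OF finite_dom_fieldmap_le[OF fin le] brec_le_empty])
  fix l t assume "G l = Some t"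
  with le obtain s where "F l = Some s" and "bsub s t"
    by (auto simp: fieldmap_le_def)
  then show "bsub (brec F) (bfield l t)"
    by (rule bsub.trans[OF brec_lower[OF fin] bfield_mono])
qed

lemma brec_le_inv:
  assumes finF: "finite (dom F)" and finG: "finite (dom G)" and le: "bsub (brec F) (brec G)"
  shows "fieldmap_le F G"
  unfolding fieldmap_le_def
proof (intro allI impI)
  fix l t assume "G l = Some t"
  then have "bsub (brec F) (bfield l t)"
    by (rule bsub.trans[OF le brec_lower[OF finG]])
  then obtain s where "F l = Some s" and "bsub s t"
    by (rule brec_le_bfield_inv[OF finF])
  then show "\<exists>s. F l = Some s \<and> bsub s t"
    by blast
qed

lemma brec_meet:
  assumes finF: "finite (dom F)" and finG: "finite (dom G)"
  shows "bsub (BInter (brec F) (brec G)) (brec (fieldmap_meet F G))"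
proof (rule brec_greatest)
  show "finite (dom (fieldmap_meet F G))"
    using finF finG by simp
  show "bsub (BInter (brec F) (brec G)) (BCon None BOmega)"
    by (rule bsub.trans[OF bsub.inter_l brec_le_empty])
  fix l t assume t: "fieldmap_meet F G l = Some t"
  have F: "bsub (BInter (brec F) (brec G)) (bfield l s)" if "F l = Some s" for s
    using bsub.trans[OF bsub.inter_l brec_lower[OF finF that]] .
  have G: "bsub (BInter (brec F) (brec G)) (bfield l s)" if "G l = Some s" for s
    using bsub.trans[OF bsub.inter_r brec_lower[OF finG that]] .
  show "bsub (BInter (brec F) (brec G)) (bfield l t)"
  proof (cases "F l")
    case None
    with t G show ?thesis
      by (simp add: fieldmap_meet_def)
  next
    case (Some s)
    show ?thesis
    proof (cases "G l")
      case None
      with t F \<open>F l = Some s\<close> show ?thesis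
        by (simp add: fieldmap_meet_def)
    next
      case (Some s')
      with t \<open>F l = Some s\<close> have "t = BInter s s'"
        by (simp add: fieldmap_meet_def)
      then show ?thesis
        using bsub.trans[OF bsub.inter_glb[OF F[OF \<open>F l = Some s\<close>] G[OF Some]] bfield_inter]
        by simp
    qed
  qed
qed

section \<open>Translation of record types with extension\<close>

fun ext_tr :: "('a, 'l::linorder) ty \<Rightarrow> ('a, 'l) bty"
  and fields :: "('a, 'l) ty \<Rightarrow> ('a, 'l) fieldmap" where
  "ext_tr (TAtom a) = BAtom a"
| "ext_tr TOmega = BOmega"
| "ext_tr (TArr s t) = BArr (ext_tr s) (ext_tr t)"
| "ext_tr (TInter s t) = BInter (ext_tr s) (ext_tr t)"
| "ext_tr REmpty = BCon None BOmega"
| "ext_tr (RField l s) = bfield l (ext_tr s)"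
| "ext_tr (RPlus r1 r2) = brec (fields r1 ++ fields r2)"
| "fields (TInter s t) = fieldmap_meet (fields s) (fields t)"
| "fields (RField l s) = [l \<mapsto> ext_tr s]"
| "fields (RPlus r1 r2) = fields r1 ++ fields r2"
| "fields (TAtom a) = Map.empty"
| "fields TOmega = Map.empty"
| "fields (TArr s t) = Map.empty"
| "fields REmpty = Map.empty"

lemma dom_fields: "dom (fields t) = lbl t"
  by (induction t) (auto split: if_splits)

lemma finite_dom_fields [simp]: "finite (dom (fields t))"
proof -
  have "finite (lbl t)"
    by (induction t) auto
  then show ?thesis
    by (simp add: dom_fields)
qed

lemma tr_eq_ext_tr: "tr L t = Some b \<Longrightarrow> b = ext_tr t"
  by (induction t arbitrary: b) (auto split: option.splits if_splits)

lemma tr_ext_tr: "trd L t \<Longrightarrow> tr L t = Some (ext_tr t)"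
  using tr_eq_ext_tr by fastforce

lemma lbl_subset_if_trd: "trd L t \<Longrightarrow> lbl t \<subseteq> L"
  by (induction t) (auto split: option.splits if_splits)

lemma level_fields_less: "trd L r \<Longrightarrow> fields r l = Some t \<Longrightarrow> level t < level (ext_tr r)"
proof (induction r arbitrary: t)
  case (TInter r1 r2)
  then show ?case
    by (auto simp: fieldmap_meet_def split: option.splits if_splits)
qed (auto split: option.splits if_splits)

lemma level_ran_fields_le: "trd L r \<Longrightarrow> level (trt L r) \<le> k \<Longrightarrow> \<forall>t\<in>ran (fields r). level t \<le> k"
  using level_fields_less[of L r] tr_ext_tr[of L r] by (fastforce simp: ran_def)

lemma bsubst_ext_tr: "trd L t \<Longrightarrow> bsubst S (ext_tr t) = ext_tr t"
  by (induction t) (auto split: option.splits if_splits)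

lemma rty_not_omega: "is_rty r \<Longrightarrow> \<not> bsub BOmega (ext_tr r)"
proof -
  assume "is_rty r"
  then have "con_args None (ext_tr r) \<noteq> []"
    by (induction r) (auto simp: brec_def)
  then show ?thesis
    by (rule omega_not_bsub_con)
qed

lemma ext_tr_equiv_brec:
  "is_rty r \<Longrightarrow> bsub (ext_tr r) (brec (fields r)) \<and> bsub (brec (fields r)) (ext_tr r)"
proof (induction r)
  case REmpty
  then show ?case
    by (simp add: brec_def bsub.inter_l bsub.inter_glb bsub.refl bsub.omega_top)
next
  case (RField l s)
  have "bsub (ext_tr (RField l s)) (brec (fields (RField l s)))"
    by (rule brec_greatest) (auto intro: bfield_le_empty bsub.refl split: if_splits)
  moreover have "bsub (brec (fields (RField l s))) (ext_tr (RField l s))"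
    using brec_lower[of "[l \<mapsto> ext_tr s]" l] by simp
  ultimately show ?case
    by blast
next
  case (TInter r1 r2)
  then have r1: "bsub (ext_tr r1) (brec (fields r1))" "bsub (brec (fields r1)) (ext_tr r1)"
    and r2: "bsub (ext_tr r2) (brec (fields r2))" "bsub (brec (fields r2)) (ext_tr r2)"
    by auto
  have "bsub (BInter (ext_tr r1) (ext_tr r2)) (BInter (brec (fields r1)) (brec (fields r2)))"
    using r1 r2 by (meson bsub.inter_glb bsub.inter_l bsub.inter_r bsub.trans)
  then have "bsub (ext_tr (TInter r1 r2)) (brec (fields (TInter r1 r2)))"
    using brec_meet[of "fields r1" "fields r2"] by (auto intro: bsub.trans)
  moreover have "bsub (brec (fields (TInter r1 r2))) (ext_tr (TInter r1 r2))"
    using bsub.trans[OF brec_mono[OF _ fieldmap_le_meet1] r1(2)]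
      bsub.trans[OF brec_mono[OF _ fieldmap_le_meet2] r2(2)]
    by (simp add: bsub.inter_glb)
  ultimately show ?case
    by blast
qed (auto simp: bsub.refl)

lemma ext_tr_fieldmap_le_rtyI:
  assumes "is_rty r" and "is_rty r'" and le: "fieldmap_le (fields r) (fields r')"
  shows "bsub (ext_tr r) (ext_tr r') \<and> fieldmap_le (fields r) (fields r')"
  using ext_tr_equiv_brec[OF assms(1)] ext_tr_equiv_brec[OF assms(2)]
    brec_mono[OF finite_dom_fields le] le
  by (meson bsub.trans)

lemma sub_ext_tr: "sub s t \<Longrightarrow> bsub (ext_tr s) (ext_tr t) \<and> fieldmap_le (fields s) (fields t)"
proof (induction rule: sub.induct)
  case (trans s t u)
  then show ?case
    by (meson bsub.trans fieldmap_le_trans)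
next
  case (field_mono s t l)
  then show ?case
    by (simp add: bfield_mono fieldmap_le_def)
next
  case plus_inter1
  then show ?case
    by (intro ext_tr_fieldmap_le_rtyI) (simp_all add: fieldmap_le_add_meet)
next
  case plus_inter2
  then show ?case
    by (intro ext_tr_fieldmap_le_rtyI) (simp_all add: fieldmap_le_meet_add)
next
  case (plus_same1 s t r l)
  then show ?case
    by (intro ext_tr_fieldmap_le_rtyI) (simp_all add: map_add_singleton_meet_same fieldmap_le_refl)
next
  case (plus_same2 s t r l)
  then show ?case
    by (intro ext_tr_fieldmap_le_rtyI) (simp_all add: map_add_singleton_meet_same fieldmap_le_refl)
next
  case (plus_diff1 l l' s t r)
  then show ?case
    by (intro ext_tr_fieldmap_le_rtyI) (simp_all add: map_add_singleton_meet_other fieldmap_le_refl)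
next
  case (plus_diff2 l l' s t r)
  then show ?case
    by (intro ext_tr_fieldmap_le_rtyI) (simp_all add: map_add_singleton_meet_other fieldmap_le_refl)
next
  case plus_mono_l
  then show ?case
    by (intro ext_tr_fieldmap_le_rtyI) (simp_all add: fieldmap_le_add_mono)
next
  case plus_cong_r
  then show ?case
    by (intro ext_tr_fieldmap_le_rtyI) (simp_all add: fieldmap_le_add_cong)
qed (use ext_tr_equiv_brec in \<open>auto simp: bsub.refl bsub.omega_top bsub.omega_arr
    bsub.inter_l bsub.inter_r bsub.inter_glb bsub.arr_dist bsub.arr_mono bfield_le_empty
    bfield_inter fieldmap_le_refl fieldmap_le_empty fieldmap_le_meet1 fieldmap_le_meet2
    fieldmap_le_meet_greatest fieldmap_meet_singletons\<close>)

lemma brec_restrict_add_le_ext_tr_RPlus: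
  assumes finF: "finite (dom F)" and le: "bsub (brec F) (ext_tr \<rho>)"
    and \<rho>: "is_rty \<rho>" "lbl \<rho> \<subseteq> L"
  shows "bsub (brec (F |` (L - lbl r) ++ fields r)) (ext_tr (RPlus \<rho> r))"
proof -
  have "fieldmap_le F (fields \<rho>)"
    using bsub.trans[OF le conjunct1[OF ext_tr_equiv_brec[OF \<rho>(1)]]]
    by (rule brec_le_inv[OF finF finite_dom_fields])
  then have "fieldmap_le (F |` (L - lbl r) ++ fields r) (fields \<rho> ++ fields r)"
    by (rule fieldmap_le_restrict_add) (use \<rho>(2) in \<open>auto simp: dom_fields\<close>)
  then show ?thesis
    using finF by (simp add: brec_mono)
qed

lemma binters_le_brec_restrict_add:
  assumes r: "is_rty r" and finF: "finite (dom F)"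
  shows "bsub (binters (ext_tr r # map (\<lambda>l. bfield l (the (F l))) (sorted_list_of_set (dom F \<inter> A))))
    (brec (F |` A ++ fields r))"
    (is "bsub (binters ?Zs) _")
proof (rule brec_greatest)
  have r_le: "bsub (binters ?Zs) (brec (fields r))"
    using bsub.trans[OF binters_lower conjunct1[OF ext_tr_equiv_brec[OF r]]] by simp
  then show "bsub (binters ?Zs) (BCon None BOmega)"
    by (rule bsub.trans[OF _ brec_le_empty])
  fix l t assume t: "(F |` A ++ fields r) l = Some t"
  show "bsub (binters ?Zs) (bfield l t)"
  proof (cases "fields r l")
    case None
    with t have "l \<in> dom F \<inter> A" and "F l = Some t"
      by (auto simp: map_add_def restrict_map_def split: if_splits)
    with finF show ?thesis
      by (intro binters_lower) auto
  next
    case (Some t')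
    with t have "fields r l = Some t"
      by simp
    then show ?thesis
      by (rule bsub.trans[OF r_le brec_lower[OF finite_dom_fields]])
  qed
qed (use finF in simp)

section \<open>Inversion of typings in \<open>\<Lambda>\<^sub>R\<close>\<close>

lemma tyass_Var_inv:
  fixes \<Gamma> :: "('a, 'l::linorder) basis"
  assumes "tyass \<Gamma> (Var x) \<tau>" and "\<And>T. (x, T) \<in> \<Gamma> \<Longrightarrow> bsub P (ext_tr T)"
  shows "bsub BOmega (ext_tr \<tau>) \<or> bsub P (ext_tr \<tau>)"
  using assms
proof (induction \<Gamma> "Var x :: 'l trm" \<tau> rule: tyass.induct)
  case (inter \<Gamma> s t)
  then show ?case
    using omega_or_bsub_BInter[where Q=True] by simp
next
  case (subsum \<Gamma> s t)
  then show ?case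
    using omega_or_bsub_mono[of "ext_tr s" True P "ext_tr t"] sub_ext_tr[of s t] by simp
qed (auto intro: bsub.refl)

lemma tyass_App_Var_inv:
  assumes "tyass \<Gamma> (App (Var x) E) \<tau>" and "\<And>T. (x, T) \<in> \<Gamma> \<Longrightarrow> T = TArr A B"
  shows "bsub BOmega (ext_tr \<tau>)
    \<or> (\<exists>a. tyass \<Gamma> E a \<and> bsub (ext_tr a) (ext_tr A)) \<and> bsub (ext_tr B) (ext_tr \<tau>)"
  using assms
proof (induction \<Gamma> "App (Var x) E" \<tau> rule: tyass.induct)
  case (app \<Gamma> s t)
  have "bsub BOmega (BArr (ext_tr s) (ext_tr t))
      \<or> bsub (BArr (ext_tr A) (ext_tr B)) (BArr (ext_tr s) (ext_tr t))"
    using tyass_Var_inv[OF app.hyps(1), of "ext_tr (TArr A B)"] app.prems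
    by (simp add: bsub.refl)
  then show ?case
  proof
    assume "bsub BOmega (BArr (ext_tr s) (ext_tr t))"
    then show ?case
      by (simp add: omega_bsub_BArr_inv)
  next
    assume "bsub (BArr (ext_tr A) (ext_tr B)) (BArr (ext_tr s) (ext_tr t))"
    then have "bsub BOmega (ext_tr t) \<or> bsub (ext_tr s) (ext_tr A) \<and> bsub (ext_tr B) (ext_tr t)"
      by (rule bsub_BArr_inv)
    then show ?case
      using app.hyps(2) by auto
  qed
next
  case (inter \<Gamma> s t)
  then show ?case
    using omega_or_bsub_BInter by simp
next
  case (subsum \<Gamma> s t)
  then show ?case
    using omega_or_bsub_mono[of "ext_tr s" _ "ext_tr B" "ext_tr t"] sub_ext_tr[of s t] by blast
qed (auto intro: bsub.refl)

section \<open>Classes and mixins in BCL\<close>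

lemma bcl_Cst_tr:
  assumes "(C, trt L t) \<in> \<Delta>" and "trd L t"
  shows "bcl k \<Delta> (Cst C) (ext_tr t)"
proof -
  have "bcl k \<Delta> (Cst C) (bsubst BVar (trt L t))"
    by (rule bcl.var[OF assms(1)]) (simp add: subst_level_le_def)
  moreover have "trt L t = ext_tr t"
    using tr_ext_tr[OF assms(2)] by simp
  ultimately show ?thesis
    by (simp add: bsubst_ext_tr[OF assms(2)])
qed

definition field_subst :: "('a, 'l) fieldmap \<Rightarrow> 'l \<Rightarrow> ('a, 'l) bty" where
  "field_subst F l = (case F l of None \<Rightarrow> BVar l | Some t \<Rightarrow> t)"

lemma bsubst_mixin_bty:
  assumes "bsubst S s = s" and "bsubst S r1 = r1" and "bsubst S r2 = r2"
  shows "bsubst S (mixin_bty L s r1 r2 LM) = BInter (BArr (BArr s r1) (BArr s r2))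
    (binters (map (\<lambda>l. BArr (BArr s (bfield l (S l))) (BArr s (bfield l (S l))))
      (sorted_list_of_set (L - LM))))"
  using assms by (simp add: mixin_bty_def bsubst_binters comp_def)

lemma bcl_mixin_app:
  fixes L :: "'l::linorder set"
  assumes repo: "(M, mixin_bty L (ext_tr s) (ext_tr r1) (ext_tr r2) (lbl r2)) \<in> \<Delta>"
    and tr: "trd L s" "trd L r1" "trd L r2" and r2: "is_rty r2" and finL: "finite L"
    and E: "bcl k \<Delta> E (BArr s0 (brec F))"
    and finF: "finite (dom F)" and levelF: "\<forall>t\<in>ran F. level t \<le> k"
    and s: "bsub (ext_tr s) s0" and r1: "bsub (brec F) (ext_tr r1)"
  shows "bcl k \<Delta> (CApp (Cst M) E) (BArr (ext_tr s) (brec (F |` (L - lbl r2) ++ fields r2)))"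
proof -
  define Zs where "Zs = ext_tr r2 # map (\<lambda>l. bfield l (the (F l)))
    (sorted_list_of_set (dom F \<inter> (L - lbl r2)))"
  let ?P = "BArr s0 (brec F)"
  let ?T = "bsubst (field_subst F) (mixin_bty L (ext_tr s) (ext_tr r1) (ext_tr r2) (lbl r2))"
  have "subst_level_le (field_subst F) k"
    using levelF by (auto simp: subst_level_le_def field_subst_def ran_def split: option.splits)
  with repo have M: "bcl k \<Delta> (Cst M) ?T"
    by (rule bcl.var)
  note T = bsubst_mixin_bty[OF bsubst_ext_tr bsubst_ext_tr bsubst_ext_tr, OF tr]
  have "bsub ?T (BArr ?P (BArr (ext_tr s) z))" if z: "z \<in> set Zs" for z
  proof -
    from z finF consider "z = ext_tr r2"
      | l where "l \<in> L - lbl r2" "l \<in> dom F" "z = bfield l (the (F l))"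
      unfolding Zs_def by auto
    then show ?thesis
    proof cases
      case 1
      have "bsub ?P (BArr (ext_tr s) (ext_tr r1))"
        using s r1 by (rule bsub.arr_mono)
      then show ?thesis
        unfolding T 1 by (meson bsub.arr_mono bsub.inter_l bsub.refl bsub.trans)
    next
      case 2
      have "bsub ?T (BArr (BArr (ext_tr s) z) (BArr (ext_tr s) z))"
        unfolding T by (rule bsub.trans[OF bsub.inter_r binters_lower])
          (use 2 finL in \<open>auto simp: field_subst_def\<close>)
      moreover have "bsub ?P (BArr (ext_tr s) z)"
        using 2 s brec_lower[OF finF, of l "the (F l)"] by (auto intro: bsub.arr_mono)
      ultimately show ?thesis
        by (meson bsub.arr_mono bsub.refl bsub.trans)
    qed
  qed
  then have "bsub ?T (BArr ?P (BArr (ext_tr s) (binters Zs)))"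
    by (rule bsub_BArr_BArr_binters)
  then have "bsub ?T (BArr ?P (BArr (ext_tr s) (brec (F |` (L - lbl r2) ++ fields r2))))"
    using binters_le_brec_restrict_add[OF r2 finF] unfolding Zs_def
    by (meson bsub.arr_mono bsub.refl bsub.trans)
  with M E show ?thesis
    by (meson bcl.app bcl.subsum)
qed

section \<open>Typing pipelines of mixin applications\<close>

locale mixin_pipeline =
  fixes L :: "'l::linorder set" and Cs Ms :: "'l trm set"
    and sigC rhoC sigM rho1M rho2M :: "'l trm \<Rightarrow> ('a, 'l) ty"
    and xC :: "'l trm \<Rightarrow> var" and xM :: "'l trm \<Rightarrow> ('a, 'l) ty \<Rightarrow> var"
    and \<Gamma> :: "('a, 'l) basis" and k :: nat and \<Delta> :: "('l trm \<times> ('a, 'l) bty) set"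
  assumes finite_labels: "finite L"
    and class_wf: "C \<in> Cs \<Longrightarrow> is_rty (rhoC C) \<and> trd L (TArr (sigC C) (rhoC C))"
    and mixin_wf: "M \<in> Ms \<Longrightarrow> is_rty (rho1M M) \<and> is_rty (rho2M M)
      \<and> trd L (sigM M) \<and> trd L (rho1M M) \<and> trd L (rho2M M)"
    and class_level: "C \<in> Cs \<Longrightarrow> level (trt L (rhoC C)) \<le> k"
    and mixin_level: "M \<in> Ms \<Longrightarrow> level (trt L (rho2M M)) \<le> k"
    and class_in_repo: "C \<in> Cs \<Longrightarrow> (C, trt L (TArr (sigC C) (rhoC C))) \<in> \<Delta>"
    and mixin_in_repo: "M \<in> Ms \<Longrightarrow>
      (M, mixin_bty L (trt L (sigM M)) (trt L (rho1M M)) (trt L (rho2M M)) (lbl (rho2M M))) \<in> \<Delta>"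
    and class_decl: "C \<in> Cs \<Longrightarrow> (xC C, T) \<in> \<Gamma> \<Longrightarrow> T = TArr (sigC C) (rhoC C)"
    and mixin_decl: "M \<in> Ms \<Longrightarrow> is_rty \<rho> \<Longrightarrow> trd L \<rho> \<Longrightarrow> (xM M \<rho>, T) \<in> \<Gamma> \<Longrightarrow>
      T = TArr (TArr (sigM M) (TInter \<rho> (rho1M M))) (TArr (sigM M) (RPlus \<rho> (rho2M M)))"
begin

definition bcl_bound :: "'l trm \<Rightarrow> 'l trm comb \<Rightarrow> ('a, 'l) bty \<Rightarrow> bool" where
  "bcl_bound E E' P \<longleftrightarrow> (\<forall>\<tau>. tyass \<Gamma> E \<tau> \<longrightarrow> \<not> bsub BOmega (ext_tr \<tau>)
      \<longrightarrow> bcl k \<Delta> E' P \<and> bsub P (ext_tr \<tau>))"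

lemma bcl_bound_class:
  assumes C: "C \<in> Cs"
  shows "bcl_bound (Var (xC C)) (Cst C) (BArr (ext_tr (sigC C)) (brec (fields (rhoC C))))"
  unfolding bcl_bound_def
proof (intro allI impI)
  let ?P = "BArr (ext_tr (sigC C)) (brec (fields (rhoC C)))"
  fix \<tau> assume typed: "tyass \<Gamma> (Var (xC C)) \<tau>" and nontriv: "\<not> bsub BOmega (ext_tr \<tau>)"
  from class_wf[OF C] have rty: "is_rty (rhoC C)" and tr: "trd L (TArr (sigC C) (rhoC C))"
    by blast+
  have P: "bsub ?P (ext_tr (TArr (sigC C) (rhoC C)))" "bsub (ext_tr (TArr (sigC C) (rhoC C))) ?P"
    using ext_tr_equiv_brec[OF rty] by (simp_all add: bsub.arr_mono bsub.refl)
  have "bcl k \<Delta> (Cst C) ?P"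
    using bcl_Cst_tr[OF class_in_repo[OF C] tr] P(2) by (rule bcl.subsum)
  moreover have "bsub (ext_tr (TArr (sigC C) (rhoC C))) (ext_tr \<tau>)"
    using tyass_Var_inv[OF typed, of "ext_tr (TArr (sigC C) (rhoC C))"] class_decl[OF C] nontriv
    by (auto simp del: ext_tr.simps intro: bsub.refl)
  ultimately show "bcl k \<Delta> (Cst C) ?P \<and> bsub ?P (ext_tr \<tau>)"
    using bsub.trans[OF P(1)] by blast
qed

lemma bcl_bound_mixin:
  assumes bound: "bcl_bound E E' (BArr s0 (brec F))"
    and finF: "finite (dom F)" and levelF: "\<forall>t\<in>ran F. level t \<le> k"
    and M: "M \<in> Ms" and \<rho>: "is_rty \<rho>" "trd L \<rho>"
  shows "bcl_bound (App (Var (xM M \<rho>)) E) (CApp (Cst M) E')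
    (BArr (ext_tr (sigM M)) (brec (F |` (L - lbl (rho2M M)) ++ fields (rho2M M))))"
  unfolding bcl_bound_def
proof (intro allI impI)
  let ?F' = "F |` (L - lbl (rho2M M)) ++ fields (rho2M M)"
  let ?A = "TArr (sigM M) (TInter \<rho> (rho1M M))" and ?B = "TArr (sigM M) (RPlus \<rho> (rho2M M))"
  fix \<tau> assume typed: "tyass \<Gamma> (App (Var (xM M \<rho>)) E) \<tau>"
    and nontriv: "\<not> bsub BOmega (ext_tr \<tau>)"
  from mixin_wf[OF M] have r1: "is_rty (rho1M M)" and r2: "is_rty (rho2M M)"
    and tr: "trd L (sigM M)" "trd L (rho1M M)" "trd L (rho2M M)"
    by blast+
  from tyass_App_Var_inv[OF typed mixin_decl[OF M \<rho>]] nontriv obtain a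
    where a: "tyass \<Gamma> E a" "bsub (ext_tr a) (ext_tr ?A)" and B: "bsub (ext_tr ?B) (ext_tr \<tau>)"
    by blast
  have I_nontriv: "\<not> bsub BOmega (BInter (ext_tr \<rho>) (ext_tr (rho1M M)))"
    using rty_not_omega[OF r1] bsub.trans[OF _ bsub.inter_r] by blast
  then have "\<not> bsub BOmega (ext_tr ?A)"
    by (auto dest: omega_bsub_BArr_inv)
  with a bound have E': "bcl k \<Delta> E' (BArr s0 (brec F))"
    and Pa: "bsub (BArr s0 (brec F)) (ext_tr a)"
    unfolding bcl_bound_def by (meson bsub.trans)+
  have "bsub (BArr s0 (brec F)) (ext_tr ?A)"
    using Pa a(2) by (rule bsub.trans)
  from bsub_BArr_inv[OF this[simplified]] I_nontriv
  have s0: "bsub (ext_tr (sigM M)) s0" and F: "bsub (brec F) (BInter (ext_tr \<rho>) (ext_tr (rho1M M)))"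
    by auto
  have "bcl k \<Delta> (CApp (Cst M) E') (BArr (ext_tr (sigM M)) (brec ?F'))"
    using mixin_in_repo[OF M] tr
    by (intro bcl_mixin_app[OF _ tr r2 finite_labels E' finF levelF s0 bsub.trans[OF F bsub.inter_r]])
       (simp add: tr_ext_tr)
  moreover have "bsub (brec ?F') (ext_tr (RPlus \<rho> (rho2M M)))"
    using bsub.trans[OF F bsub.inter_l] \<rho> lbl_subset_if_trd
    by (intro brec_restrict_add_le_ext_tr_RPlus[OF finF]) auto
  ultimately show "bcl k \<Delta> (CApp (Cst M) E') (BArr (ext_tr (sigM M)) (brec ?F'))
      \<and> bsub (BArr (ext_tr (sigM M)) (brec ?F')) (ext_tr \<tau>)"
    using B bsub.trans[OF bsub.arr_mono[OF bsub.refl]] by auto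
qed

lemma pipeline_bcl_bound:
  assumes C: "C \<in> Cs" and ms: "\<forall>(M, \<rho>)\<in>set ms. M \<in> Ms \<and> is_rty \<rho> \<and> trd L \<rho>"
  shows "\<exists>s F. finite (dom F) \<and> (\<forall>t\<in>ran F. level t \<le> k)
    \<and> bcl_bound (pipe_trm (Var (xC C)) (map (\<lambda>(M, \<rho>). Var (xM M \<rho>)) ms))
        (pipe_comb (Cst C) (map (\<lambda>(M, \<rho>). Cst M) ms)) (BArr s (brec F))"
  using ms
proof (induction ms rule: rev_induct)
  case Nil
  from class_wf[OF C] have "trd L (rhoC C)"
    by (auto split: option.splits)
  with class_level[OF C] show ?case
    using level_ran_fields_le bcl_bound_class[OF C] unfolding pipe_trm_def pipe_comb_def
    by (intro exI[of _ "ext_tr (sigC C)"] exI[of _ "fields (rhoC C)"]) simp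
next
  case (snoc m ms)
  obtain M \<rho> where m: "m = (M, \<rho>)" and M: "M \<in> Ms" "is_rty \<rho>" "trd L \<rho>"
    using snoc.prems by (cases m) auto
  from snoc obtain s F where finF: "finite (dom F)" and levelF: "\<forall>t\<in>ran F. level t \<le> k"
    and bound: "bcl_bound (pipe_trm (Var (xC C)) (map (\<lambda>(M, \<rho>). Var (xM M \<rho>)) ms))
        (pipe_comb (Cst C) (map (\<lambda>(M, \<rho>). Cst M) ms)) (BArr s (brec F))"
    by auto
  let ?F' = "F |` (L - lbl (rho2M M)) ++ fields (rho2M M)"
  have "\<forall>t\<in>ran (fields (rho2M M)). level t \<le> k"
    by (rule level_ran_fields_le) (use mixin_wf[OF M(1)] mixin_level[OF M(1)] in auto)
  with levelF have "\<forall>t\<in>ran ?F'. level t \<le> k"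
    by (auto simp: ran_def map_add_def restrict_map_def split: option.splits if_splits)
  moreover have "finite (dom ?F')"
    using finF by simp
  moreover note bcl_bound_mixin[OF bound finF levelF M]
  ultimately show ?case
    unfolding m pipe_trm_def pipe_comb_def
    by (intro exI[of _ "ext_tr (sigM M)"] exI[of _ ?F']) simp
qed

lemma pipeline_bcl:
  assumes "C \<in> Cs" and "\<forall>(M, \<rho>)\<in>set ms. M \<in> Ms \<and> is_rty \<rho> \<and> trd L \<rho>"
    and \<rho>: "is_rty \<rho>" and tr: "trd L (TArr \<sigma> \<rho>)"
    and typed: "tyass \<Gamma> (pipe_trm (Var (xC C)) (map (\<lambda>(M, \<rho>). Var (xM M \<rho>)) ms)) (TArr \<sigma> \<rho>)"
  shows "bcl k \<Delta> (pipe_comb (Cst C) (map (\<lambda>(M, \<rho>). Cst M) ms)) (trt L (TArr \<sigma> \<rho>))"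
proof -
  obtain P where "bcl_bound (pipe_trm (Var (xC C)) (map (\<lambda>(M, \<rho>). Var (xM M \<rho>)) ms))
      (pipe_comb (Cst C) (map (\<lambda>(M, \<rho>). Cst M) ms)) P"
    using pipeline_bcl_bound[OF assms(1,2)] by blast
  moreover have "\<not> bsub BOmega (ext_tr (TArr \<sigma> \<rho>))"
    using rty_not_omega[OF \<rho>] by (auto dest: omega_bsub_BArr_inv)
  ultimately have "bcl k \<Delta> (pipe_comb (Cst C) (map (\<lambda>(M, \<rho>). Cst M) ms)) (ext_tr (TArr \<sigma> \<rho>))"
    using typed unfolding bcl_bound_def by (blast intro: bcl.subsum)
  then show ?thesis
    using tr_ext_tr[OF tr] by simp
qed

end

lemma basis_class_decl:
  assumes "\<Gamma> \<subseteq> {(xC C', DC C') | C'. C' \<in> Cs} \<union> {(xM M \<rho>, DM M \<rho>) | M \<rho>. M \<in> Ms \<and> P \<rho>}"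
    and "inj_on xC Cs" and "\<forall>C'\<in>Cs. \<forall>M\<in>Ms. \<forall>\<rho>. P \<rho> \<longrightarrow> xC C' \<noteq> xM M \<rho>"
    and "C \<in> Cs" and "(xC C, T) \<in> \<Gamma>"
  shows "T = DC C"
  using assms by (blast dest: inj_onD)

lemma basis_mixin_decl:
  assumes "\<Gamma> \<subseteq> {(xC C, DC C) | C. C \<in> Cs} \<union> {(xM M' \<rho>', DM M' \<rho>') | M' \<rho>'. M' \<in> Ms \<and> P \<rho>'}"
    and "inj_on (\<lambda>(M', \<rho>'). xM M' \<rho>') {(M', \<rho>'). M' \<in> Ms \<and> P \<rho>'}"
    and "\<forall>C\<in>Cs. \<forall>M'\<in>Ms. \<forall>\<rho>'. P \<rho>' \<longrightarrow> xC C \<noteq> xM M' \<rho>'"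
    and "M \<in> Ms" and "P \<rho>" and "(xM M \<rho>, T) \<in> \<Gamma>"
  shows "T = DM M \<rho>"
proof -
  from assms(1,6) have "(xM M \<rho>, T) \<in> {(xC C, DC C) | C. C \<in> Cs}
      \<union> {(xM M' \<rho>', DM M' \<rho>') | M' \<rho>'. M' \<in> Ms \<and> P \<rho>'}"
    by blast
  with assms(3-5) obtain M' \<rho>' where "M' \<in> Ms" "P \<rho>'" "xM M \<rho> = xM M' \<rho>'" "T = DM M' \<rho>'"
    by fastforce
  moreover from this assms(2,4,5) have "(M, \<rho>) = (M', \<rho>')"
    by (intro inj_onD[OF assms(2)]) auto
  ultimately show ?thesis
    by simp
qed

theorem theorem5p5:
  fixes L :: "'l::linorder set" and Cs Ms :: "'l trm set"
    and sigC rhoC sigM rho1M rho2M :: "'l trm \<Rightarrow> ('a, 'l) ty"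
    and xC :: "'l trm \<Rightarrow> var" and xM :: "'l trm \<Rightarrow> ('a, 'l) ty \<Rightarrow> var"
    and \<Gamma> :: "('a, 'l) basis" and \<sigma> \<rho> :: "('a, 'l) ty"
    and ms :: "('l trm \<times> ('a, 'l) ty) list" and C :: "'l trm"
  assumes finL: "finite L" and finC: "finite Cs" and finM: "finite Ms"
    and classes: "\<forall>C\<in>Cs. is_class C \<and> is_ty (sigC C) \<and> is_rty (rhoC C)
                     \<and> trd L (TArr (sigC C) (rhoC C))
                     \<and> tyass {} C (TArr (sigC C) (rhoC C))"
    and mixins: "\<forall>M\<in>Ms. is_mixin M \<and> is_ty (sigM M) \<and> is_rty (rho1M M) \<and> is_rty (rho2M M)
                     \<and> trd L (sigM M) \<and> trd L (rho1M M) \<and> trd L (rho2M M)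
                     \<and> (\<forall>\<rho>'. is_rty \<rho>' \<longrightarrow>
                          tyass {} M (TArr (TArr (sigM M) (TInter \<rho>' (rho1M M)))
                                         (TArr (sigM M) (RPlus \<rho>' (rho2M M)))))
                     \<and> lbl (rho2M M) \<subseteq> L \<and> lbl (rho2M M) \<noteq> {}"
    and xC_inj: "inj_on xC Cs"
    and xM_inj: "inj_on (\<lambda>(M, \<rho>'). xM M \<rho>') {(M, \<rho>'). M \<in> Ms \<and> is_rty \<rho>' \<and> trd L \<rho>'}"
    and x_disj: "\<forall>C'\<in>Cs. \<forall>M\<in>Ms. \<forall>\<rho>'. is_rty \<rho>' \<and> trd L \<rho>' \<longrightarrow> xC C' \<noteq> xM M \<rho>'"
    and finG: "finite \<Gamma>"
    and Gamma: "\<Gamma> \<subseteq> {(xC C', TArr (sigC C') (rhoC C')) | C'. C' \<in> Cs}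
                  \<union> {(xM M \<rho>', TArr (TArr (sigM M) (TInter \<rho>' (rho1M M)))
                                     (TArr (sigM M) (RPlus \<rho>' (rho2M M))))
                      | M \<rho>'. M \<in> Ms \<and> is_rty \<rho>' \<and> trd L \<rho>'}"
    and sig: "is_ty \<sigma>" and rho: "is_rty \<rho>" and tr_def: "trd L (TArr \<sigma> \<rho>)"
    and ms: "\<forall>(M, \<rho>')\<in>set ms. M \<in> Ms \<and> is_rty \<rho>' \<and> trd L \<rho>'"
    and C: "C \<in> Cs"
    and typed: "tyass \<Gamma> (pipe_trm (Var (xC C)) (map (\<lambda>(M, \<rho>'). Var (xM M \<rho>')) ms)) (TArr \<sigma> \<rho>)"
  shows "bcl (Max ((\<lambda>C'. level (trt L (rhoC C'))) ` Cs
                   \<union> (\<lambda>M. level (trt L (rho2M M))) ` Ms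
                   \<union> {level (trt L \<rho>)}))
             (repo L Cs Ms sigC rhoC sigM rho1M rho2M)
             (pipe_comb (Cst C) (map (\<lambda>(M, \<rho>'). Cst M) ms))
             (trt L (TArr \<sigma> \<rho>))"
proof -
  interpret mixin_pipeline L Cs Ms sigC rhoC sigM rho1M rho2M xC xM \<Gamma>
    "Max ((\<lambda>C'. level (trt L (rhoC C'))) ` Cs \<union> (\<lambda>M. level (trt L (rho2M M))) ` Ms
      \<union> {level (trt L \<rho>)})"
    "repo L Cs Ms sigC rhoC sigM rho1M rho2M"
  proof
    show "T = TArr (sigC C') (rhoC C')" if "C' \<in> Cs" "(xC C', T) \<in> \<Gamma>" for C' T
      using basis_class_decl[OF Gamma xC_inj x_disj that] .
    show "T = TArr (TArr (sigM M) (TInter \<rho>' (rho1M M))) (TArr (sigM M) (RPlus \<rho>' (rho2M M)))"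
      if "M \<in> Ms" "is_rty \<rho>'" "trd L \<rho>'" "(xM M \<rho>', T) \<in> \<Gamma>" for M \<rho>' T
      using basis_mixin_decl[OF Gamma xM_inj x_disj] that by blast
  qed (use finL finC finM classes mixins in \<open>auto simp: repo_def intro!: Max_ge\<close>)
  show ?thesis
    by (rule pipeline_bcl[OF C ms rho tr_def typed])
qed

end
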